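(* In the Ornstein–Uhlenbeck setting described in the context, regard the optimal intervention boundaries as functions $a^*(\theta)$, $b^*(\theta)$ of the reference target $\theta$, all other parameters $(r,\rho,m,\sigma,c_1,c_2)$ being fixed. Then $\theta\mapsto a^*(\theta)$ and $\theta\mapsto b^*(\theta)$ are both increasing.
   Context: Fix parameters $r>0$, $\rho>0$, $m\in\mathbb{R}$, $\sigma>0$, a reference target $\theta$ (the logarithm of the central parity) and constants $c_1,c_2\in\mathbb{R}$ with $c_1+c_2>0$. The (log-)exchange rate controlled by $\nu=\xi-\eta$ (difference of two nondecreasing adapted left-continuous processes started at $0$, with increments on disjoint sets) evolves as $dX_t=\rho(m-X_t)dt+\sigma dB_t+d\xi_t-d\eta_t$, $X_0=x\in\mathbb{R}$, where $B$ is a Brownian motion. The central bank minimizes over admissible controls $\mathbb{E}_x[\int_0^\infty e^{-rs}\tfrac12(X_s-\theta)^2ds+c_1\int_0^\infty e^{-rs}d\xi_s+c_2\int_0^\infty e^{-rs}d\eta_s]$ (jumps included). Let $D_\alpha(y)=\frac{e^{-y^2/4}}{\Gamma(-\alpha)}\int_0^\infty t^{-\alpha-1}e^{-t^2/2-yt}dt$ ($\alpha<0$), $\widehat\phi(x)=e^{\rho(x-m)^2/(2\sigma^2)}D_{-(r+\rho)/\rho}\big(\tfrac{(x-m)\sqrt{2\rho}}{\sigma}\big)$, $\widehat\psi(x)=e^{\rho(x-m)^2/(2\sigma^2)}D_{-(r+\rho)/\rho}\big(-\tfrac{(x-m)\sqrt{2\rho}}{\sigma}\big)$, $\widehat m'(z)=\frac{2}{\sigma^2}e^{-\rho(z-m)^2/\sigma^2}$.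 The optimal intervention boundaries $a^*<b^*$ are the unique pair with $a^*<\theta-(r+\rho)c_1$ and $b^*>\theta+(r+\rho)c_2$ solving $\int_a^b(z-\theta+(r+\rho)c_1)\widehat m'\widehat\phi\,dz=-(r+\rho)(c_1+c_2)\int_b^\infty\widehat m'\widehat\phi\,dz$ and $\int_a^b(z-\theta-(r+\rho)c_2)\widehat m'\widehat\psi\,dz=(r+\rho)(c_1+c_2)\int_{-\infty}^a\widehat m'\widehat\psi\,dz$; the optimal policy keeps $X$ in $[a^*,b^*]$ by minimal reflection. *)

theory Defs
  imports "HOL-Analysis.Analysis"
begin

text \<open>Parabolic cylinder function D_alpha (alpha < 0), via its integral representation.\<close>
definition parcyl :: "real \<Rightarrow> real \<Rightarrow> real" where
  "parcyl \<alpha> y = exp (- (y^2) / 4) / Gamma (- \<alpha>) *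
     (LBINT t:{0<..}. t powr (- \<alpha> - 1) * exp (- (t^2) / 2 - y * t))"

definition phi_hat :: "real \<Rightarrow> real \<Rightarrow> real \<Rightarrow> real \<Rightarrow> real \<Rightarrow> real" where
  "phi_hat r \<rho> m \<sigma> x = exp (\<rho> * (x - m)^2 / (2 * \<sigma>^2)) *
     parcyl (- (r + \<rho>) / \<rho>) ((x - m) * sqrt (2 * \<rho>) / \<sigma>)"

definition psi_hat :: "real \<Rightarrow> real \<Rightarrow> real \<Rightarrow> real \<Rightarrow> real \<Rightarrow> real" where
  "psi_hat r \<rho> m \<sigma> x = exp (\<rho> * (x - m)^2 / (2 * \<sigma>^2)) *
     parcyl (- (r + \<rho>) / \<rho>) (- ((x - m) * sqrt (2 * \<rho>) / \<sigma>))"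

definition speed_dens :: "real \<Rightarrow> real \<Rightarrow> real \<Rightarrow> real \<Rightarrow> real" where
  "speed_dens \<rho> m \<sigma> z = 2 / \<sigma>^2 * exp (- \<rho> * (z - m)^2 / \<sigma>^2)"

definition opt_boundaries ::
  "real \<Rightarrow> real \<Rightarrow> real \<Rightarrow> real \<Rightarrow> real \<Rightarrow> real \<Rightarrow> real \<Rightarrow> real \<Rightarrow> real \<Rightarrow> bool" where
  "opt_boundaries r \<rho> m \<sigma> c1 c2 \<theta> a b \<longleftrightarrow>
     a < b \<and> a < \<theta> - (r + \<rho>) * c1 \<and> b > \<theta> + (r + \<rho>) * c2 \<and>
     (LBINT z:{a..b}. (z - \<theta> + (r + \<rho>) * c1) * speed_dens \<rho> m \<sigma> z * phi_hat r \<rho> m \<sigma> z)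
       = - (r + \<rho>) * (c1 + c2) * (LBINT z:{b..}. speed_dens \<rho> m \<sigma> z * phi_hat r \<rho> m \<sigma> z) \<and>
     (LBINT z:{a..b}. (z - \<theta> - (r + \<rho>) * c2) * speed_dens \<rho> m \<sigma> z * psi_hat r \<rho> m \<sigma> z)
       = (r + \<rho>) * (c1 + c2) * (LBINT z:{..a}. speed_dens \<rho> m \<sigma> z * psi_hat r \<rho> m \<sigma> z)"

end

theory Submission
  imports Defs "HOL-Probability.Probability"
begin

text \<open>
  Both \<open>\<phi>\<close> and \<open>\<psi>\<close> are positive, \<open>\<phi>\<close> strictly decreasing and \<open>\<psi>\<close> strictly increasing, so
  \<open>\<phi>/\<psi>\<close> is strictly decreasing. With \<open>K = (r+\<rho>)(c\<^sub>1+c\<^sub>2)\<close> and \<open>v = \<theta> + (r+\<rho>)c\<^sub>2\<close>, the two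
  boundary equations say that the step kernel \<open>k\<close>, equal to \<open>-K\<close> left of \<open>a\<close>, to \<open>z - v\<close> on
  \<open>[a,b]\<close> and to \<open>0\<close> right of \<open>b\<close>, is orthogonal to \<open>m'\<psi>\<close>, and \<open>k + K\<close> is orthogonal to \<open>m'\<phi>\<close>.
  For two targets \<open>\<theta>\<^sub>1 < \<theta>\<^sub>2\<close> the difference \<open>e\<close> of the kernels is therefore orthogonal to
  both \<open>m'\<phi>\<close> and \<open>m'\<psi>\<close>. If the boundaries do not both move up, \<open>e\<close> changes sign only once,
  at some \<open>c\<close>, so \<open>e \<cdot> (\<phi>(c)\<psi> - \<psi>(c)\<phi>) m'\<close> has constant sign and integral zero, forcing
  \<open>e = 0\<close> almost everywhere. But \<open>e = v\<^sub>1 - v\<^sub>2 \<noteq> 0\<close> on the common interior of both intervals.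
\<close>

lemma integrable_gaussian:
  fixes A c :: real
  assumes "A > 0"
  shows "integrable lborel (\<lambda>x. exp (- A * (x - c)^2))"
proof -
  define s where "s = 1 / sqrt (2 * A)"
  have s: "s > 0" using assms by (simp add: s_def)
  have s2: "2 * s^2 = 1 / A" using assms by (simp add: s_def power_divide)
  have "integrable lborel (\<lambda>x. sqrt (2 * pi * s\<^sup>2) * normal_density c s x)"
    using integrable_normal_density[OF s] by simp
  moreover have "(\<lambda>x. sqrt (2 * pi * s\<^sup>2) * normal_density c s x) = (\<lambda>x. exp (- A * (x - c)^2))"
    using s s2 assms by (auto simp: normal_density_def fun_eq_iff field_simps)
  ultimately show ?thesis by simp
qed

lemma not_AE_zero_if_nonzero_on_interval:
  fixes f :: "real \<Rightarrow> real"
  assumes "\<alpha> < \<beta>" and "\<And>z. \<alpha> < z \<Longrightarrow> z < \<beta> \<Longrightarrow> f z \<noteq> 0"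
  shows "\<not> (AE z in lborel. f z = 0)"
proof
  assume "AE z in lborel. f z = 0"
  then have "AE z in lborel. z \<notin> {\<alpha><..<\<beta>}"
    by eventually_elim (use assms(2) in auto)
  then have "{\<alpha><..<\<beta>} \<in> null_sets lborel"
    by (subst AE_iff_null_sets) auto
  with assms(1) show False by (simp add: null_sets_def)
qed

lemma integral_pos_if_pos_on_interval:
  fixes f :: "real \<Rightarrow> real"
  assumes f: "integrable lborel f" and nonneg: "AE z in lborel. 0 \<le> f z"
    and "\<alpha> < \<beta>" and "\<And>z. \<alpha> < z \<Longrightarrow> z < \<beta> \<Longrightarrow> f z > 0"
  shows "integral\<^sup>L lborel f > 0"
proof -
  have "\<not> (AE z in lborel. f z = 0)"
    by (rule not_AE_zero_if_nonzero_on_interval[OF assms(3)]) (use assms(4) in force)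
  then have "integral\<^sup>L lborel f \<noteq> 0"
    using integral_nonneg_eq_0_iff_AE[OF f nonneg] by simp
  with integral_nonneg_AE[OF nonneg] show ?thesis by simp
qed

definition parcyl_integral :: "real \<Rightarrow> real \<Rightarrow> real" where
  "parcyl_integral \<beta> y = (LBINT t:{0<..}. t powr \<beta> * exp (- (t^2) / 2 - y * t))"

lemma parcyl_integrand_integrable:
  fixes \<beta> y :: real
  assumes "\<beta> \<ge> 0"
  shows "set_integrable lborel {0<..} (\<lambda>t. t powr \<beta> * exp (- (t^2) / 2 - y * t))"
proof (rule set_integrable_bound)
  define c where "c = \<beta> - y"
  show "set_integrable lborel {0<..} (\<lambda>t. exp (c^2/2) * exp (- (1/2) * (t - c)^2))"
    unfolding set_integrable_def
    by (intro integrable_mult_indicator integrable_mult_right integrable_gaussian) auto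
  show "set_borel_measurable lborel {0<..} (\<lambda>t. t powr \<beta> * exp (- (t^2) / 2 - y * t))"
    unfolding set_borel_measurable_def by measurable
  show "AE t in lborel. t \<in> {0<..} \<longrightarrow> norm (t powr \<beta> * exp (- (t^2) / 2 - y * t))
      \<le> norm (exp (c^2/2) * exp (- (1/2) * (t - c)^2))"
  proof (intro AE_I2 impI)
    fix t :: real assume t: "t \<in> {0<..}"
    have "t powr \<beta> = exp (\<beta> * ln t)" using t by (simp add: powr_def)
    also have "\<dots> \<le> exp (\<beta> * t)"
      using t assms ln_bound[of t] by (simp add: mult_left_mono)
    finally have "t powr \<beta> * exp (- (t^2) / 2 - y * t) \<le> exp (\<beta> * t) * exp (- (t^2) / 2 - y * t)"
      by (intro mult_right_mono) auto
    also have "\<dots> = exp (c^2/2) * exp (- (1/2) * (t - c)^2)"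
      unfolding exp_add[symmetric] c_def by (simp add: power2_eq_square field_simps)
    finally show "norm (t powr \<beta> * exp (- (t^2) / 2 - y * t))
      \<le> norm (exp (c^2/2) * exp (- (1/2) * (t - c)^2))" by simp
  qed
qed

lemma parcyl_integral_pos:
  assumes "\<beta> \<ge> 0"
  shows "parcyl_integral \<beta> y > 0"
  unfolding parcyl_integral_def set_lebesgue_integral_def
proof (rule integral_pos_if_pos_on_interval[of _ 0 1])
  show "integrable lborel (\<lambda>t. indicator {0<..} t *\<^sub>R (t powr \<beta> * exp (- (t^2) / 2 - y * t)))"
    using parcyl_integrand_integrable[OF assms] by (simp add: set_integrable_def)
qed (auto simp: indicator_def)

lemma parcyl_integral_strict_antimono:
  assumes "\<beta> \<ge> 0" and "y1 < y2"
  shows "parcyl_integral \<beta> y2 < parcyl_integral \<beta> y1"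
proof -
  let ?f = "\<lambda>y t. t powr \<beta> * exp (- (t^2) / 2 - y * t)"
  have "parcyl_integral \<beta> y1 - parcyl_integral \<beta> y2 = (LBINT t:{0<..}. ?f y1 t - ?f y2 t)"
    unfolding parcyl_integral_def
    by (rule set_integral_diff(2)[symmetric]; rule parcyl_integrand_integrable[OF assms(1)])
  also have "\<dots> > 0"
    unfolding set_lebesgue_integral_def
  proof (rule integral_pos_if_pos_on_interval[of _ 0 1])
    show "integrable lborel (\<lambda>t. indicator {0<..} t *\<^sub>R (?f y1 t - ?f y2 t))"
      using set_integral_diff(1)[OF parcyl_integrand_integrable parcyl_integrand_integrable] assms
      by (simp add: set_integrable_def)
    have "?f y2 t < ?f y1 t" if "t > 0" for t
      using that assms by (intro mult_strict_left_mono) auto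
    then show "AE t in lborel. 0 \<le> indicator {0<..} t *\<^sub>R (?f y1 t - ?f y2 t)"
      and "\<And>t. 0 < t \<Longrightarrow> t < 1 \<Longrightarrow> 0 < indicator {0<..} t *\<^sub>R (?f y1 t - ?f y2 t)"
      by (auto simp: indicator_def less_imp_le)
  qed simp
  finally show ?thesis by simp
qed

lemma phi_hat_eq_parcyl_integral:
  assumes "\<rho> > 0" and "\<sigma> > 0"
  shows "phi_hat r \<rho> m \<sigma> x =
    parcyl_integral (r / \<rho>) ((x - m) * sqrt (2 * \<rho>) / \<sigma>) / Gamma ((r + \<rho>) / \<rho>)"
proof -
  define y where "y = (x - m) * sqrt (2 * \<rho>) / \<sigma>"
  have e1: "(r + \<rho>) / \<rho> - 1 = r / \<rho>" using assms by (simp add: field_simps)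
  have e0: "- (- (r + \<rho>) / \<rho>) = (r + \<rho>) / \<rho>"
    by (simp only: minus_divide_left[symmetric] minus_minus)
  have y2: "y^2 = (x - m)^2 * (2 * \<rho>) / \<sigma>^2"
    using assms by (simp add: y_def power_divide power_mult_distrib)
  have e2: "exp (\<rho> * (x - m)^2 / (2 * \<sigma>^2)) * exp (- (y^2) / 4) = 1"
    unfolding exp_add[symmetric] y2 using assms by (simp add: field_simps)
  have "phi_hat r \<rho> m \<sigma> x = (exp (\<rho> * (x - m)^2 / (2 * \<sigma>^2)) * exp (- (y^2) / 4)) *
      parcyl_integral (r / \<rho>) y / Gamma ((r + \<rho>) / \<rho>)"
    unfolding phi_hat_def parcyl_def parcyl_integral_def e0 e1 y_def[symmetric] by simp
  then show ?thesis unfolding y_def[symmetric] e2 by simp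
qed

lemma psi_hat_eq_phi_hat_reflect: "psi_hat r \<rho> m \<sigma> x = phi_hat r \<rho> m \<sigma> (2 * m - x)"
proof -
  have "- ((x - m) * sqrt (2 * \<rho>) / \<sigma>) = (2 * m - x - m) * sqrt (2 * \<rho>) / \<sigma>"
    by (simp add: minus_divide_left algebra_simps)
  moreover have "(x - m)^2 = (2 * m - x - m)^2"
    by (simp add: power2_eq_square algebra_simps)
  ultimately show ?thesis unfolding psi_hat_def phi_hat_def by simp
qed

lemma phi_hat_pos:
  assumes "r \<ge> 0" and "\<rho> > 0" and "\<sigma> > 0"
  shows "phi_hat r \<rho> m \<sigma> x > 0"
  unfolding phi_hat_eq_parcyl_integral[OF assms(2,3)] using assms
  by (intro divide_pos_pos parcyl_integral_pos Gamma_real_pos) auto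

lemma phi_hat_strict_antimono:
  assumes "r \<ge> 0" and "\<rho> > 0" and "\<sigma> > 0" and "x1 < x2"
  shows "phi_hat r \<rho> m \<sigma> x2 < phi_hat r \<rho> m \<sigma> x1"
  unfolding phi_hat_eq_parcyl_integral[OF assms(2,3)]
proof (rule divide_strict_right_mono)
  have "(x1 - m) * sqrt (2 * \<rho>) / \<sigma> < (x2 - m) * sqrt (2 * \<rho>) / \<sigma>"
    using assms by (intro divide_strict_right_mono mult_strict_right_mono) auto
  then show "parcyl_integral (r / \<rho>) ((x2 - m) * sqrt (2 * \<rho>) / \<sigma>)
      < parcyl_integral (r / \<rho>) ((x1 - m) * sqrt (2 * \<rho>) / \<sigma>)"
    using assms by (intro parcyl_integral_strict_antimono) auto
  show "0 < Gamma ((r + \<rho>) / \<rho>)" using assms by auto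
qed

lemma psi_hat_strict_mono:
  assumes "r \<ge> 0" and "\<rho> > 0" and "\<sigma> > 0" and "x1 < x2"
  shows "psi_hat r \<rho> m \<sigma> x1 < psi_hat r \<rho> m \<sigma> x2"
  unfolding psi_hat_eq_phi_hat_reflect using assms by (intro phi_hat_strict_antimono) auto

lemma borel_measurable_psi_hat:
  assumes "r \<ge> 0" and "\<rho> > 0" and "\<sigma> > 0"
  shows "psi_hat r \<rho> m \<sigma> \<in> borel_measurable borel"
  by (rule borel_measurable_mono, rule monoI)
    (metis assms psi_hat_strict_mono order_le_less order_less_imp_le)

lemma borel_measurable_phi_hat:
  assumes "r \<ge> 0" and "\<rho> > 0" and "\<sigma> > 0"
  shows "phi_hat r \<rho> m \<sigma> \<in> borel_measurable borel"
proof -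
  have "phi_hat r \<rho> m \<sigma> = (\<lambda>x. psi_hat r \<rho> m \<sigma> (2 * m - x))"
    by (simp add: psi_hat_eq_phi_hat_reflect)
  also have "\<dots> \<in> borel_measurable borel"
    using borel_measurable_psi_hat[OF assms] by measurable
  finally show ?thesis .
qed

lemma speed_dens_pos: "\<sigma> \<noteq> 0 \<Longrightarrow> speed_dens \<rho> m \<sigma> z > 0"
  by (simp add: speed_dens_def)

lemma integrable_speed_dens:
  assumes "\<rho> > 0" and "\<sigma> > 0"
  shows "integrable lborel (speed_dens \<rho> m \<sigma>)"
proof -
  have "speed_dens \<rho> m \<sigma> = (\<lambda>z. 2 / \<sigma>^2 * exp (- (\<rho> / \<sigma>^2) * (z - m)^2))"
    by (simp add: speed_dens_def fun_eq_iff)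
  then show ?thesis
    using assms by (metis integrable_mult_right integrable_gaussian divide_pos_pos zero_less_power)
qed

lemma set_integrable_speed_dens_mult:
  fixes g :: "real \<Rightarrow> real"
  assumes "\<rho> > 0" and "\<sigma> > 0" and "S \<in> sets borel" and [measurable]: "g \<in> borel_measurable borel"
    and "\<And>z. z \<in> S \<Longrightarrow> \<bar>g z\<bar> \<le> B"
  shows "set_integrable lborel S (\<lambda>z. speed_dens \<rho> m \<sigma> z * g z)"
proof (rule set_integrable_bound)
  show "set_integrable lborel S (\<lambda>z. B * speed_dens \<rho> m \<sigma> z)"
    unfolding set_integrable_def using assms(1-3)
    by (intro integrable_mult_indicator integrable_mult_right integrable_speed_dens) auto
  show "set_borel_measurable lborel S (\<lambda>z. speed_dens \<rho> m \<sigma> z * g z)"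
    unfolding set_borel_measurable_def speed_dens_def using assms(3) by measurable
  have "\<bar>speed_dens \<rho> m \<sigma> z * g z\<bar> \<le> \<bar>B * speed_dens \<rho> m \<sigma> z\<bar>" if "z \<in> S" for z
    using assms(5)[OF that] speed_dens_pos[of \<sigma> \<rho> m z] assms(2)
    by (simp add: abs_mult mult.commute mult_right_mono)
  then show "AE z in lborel. z \<in> S \<longrightarrow>
      norm (speed_dens \<rho> m \<sigma> z * g z) \<le> norm (B * speed_dens \<rho> m \<sigma> z)"
    by auto
qed

definition boundary_kernel :: "real \<Rightarrow> real \<Rightarrow> real \<Rightarrow> real \<Rightarrow> real \<Rightarrow> real" where
  "boundary_kernel K a b v z = indicator {a..b} z * (z - v) - indicator {..a} z * K"

lemma boundary_kernel_diff_middle: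
  assumes "max a1 a2 < z" and "z < min b1 b2"
  shows "boundary_kernel K a2 b2 v2 z - boundary_kernel K a1 b1 v1 z = v1 - v2"
  using assms by (simp add: boundary_kernel_def)

context
  fixes K v1 v2 a1 b1 a2 b2 :: real
  assumes K: "K > 0" and v12: "v1 < v2"
    and a1: "a1 < v1 - K" and b1: "v1 < b1" and a2: "a2 < v2 - K" and b2: "v2 < b2"
begin

lemma boundary_kernel_cross_up:
  assumes "a2 \<le> a1" and "z \<notin> {a1, b1, a2, b2}"
  shows "z < max b1 v2 \<Longrightarrow> boundary_kernel K a2 b2 v2 z \<le> boundary_kernel K a1 b1 v1 z"
    and "max b1 v2 < z \<Longrightarrow> boundary_kernel K a1 b1 v1 z \<le> boundary_kernel K a2 b2 v2 z"
  using assms K v12 a1 b1 a2 b2 by (auto simp: boundary_kernel_def indicator_def)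

lemma boundary_kernel_cross_down:
  assumes "b2 \<le> b1" and "z \<notin> {a1, b1, a2, b2}"
  shows "z < min a2 (v1 - K) \<Longrightarrow> boundary_kernel K a1 b1 v1 z \<le> boundary_kernel K a2 b2 v2 z"
    and "min a2 (v1 - K) < z \<Longrightarrow> boundary_kernel K a2 b2 v2 z \<le> boundary_kernel K a1 b1 v1 z"
  using assms K v12 a1 b1 a2 b2 by (auto simp: boundary_kernel_def indicator_def)

end

locale decreasing_ratio_pair =
  fixes p q :: "real \<Rightarrow> real"
  assumes ratio_strict_antimono: "\<And>z c. z < c \<Longrightarrow> p c * q z < p z * q c"
    and p_measurable [measurable]: "p \<in> borel_measurable borel"
    and q_measurable [measurable]: "q \<in> borel_measurable borel"
    and p_integrable_Icc: "\<And>a b u. set_integrable lborel {a..b} (\<lambda>z. (z - u) * p z)"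
    and q_integrable_Icc: "\<And>a b u. set_integrable lborel {a..b} (\<lambda>z. (z - u) * q z)"
    and p_integrable_Ici: "\<And>b. set_integrable lborel {b..} p"
    and q_integrable_Iic: "\<And>a. set_integrable lborel {..a} q"
begin

lemma orthogonal_single_crossing_AE_zero:
  fixes e :: "real \<Rightarrow> real"
  assumes ep: "has_bochner_integral lborel (\<lambda>z. e z * p z) 0"
    and eq: "has_bochner_integral lborel (\<lambda>z. e z * q z) 0"
    and below: "AE z in lborel. z < c \<longrightarrow> e z \<le> 0"
    and above: "AE z in lborel. c < z \<longrightarrow> 0 \<le> e z"
  shows "AE z in lborel. e z = 0"
proof -
  define f where "f z = e z * (p c * q z - q c * p z)" for z
  have "has_bochner_integral lborel f (p c * 0 - q c * 0)"
    unfolding f_def using has_bochner_integral_diff[OF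
      has_bochner_integral_mult_right[OF eq, of "p c"] has_bochner_integral_mult_right[OF ep, of "q c"]]
    by (simp add: algebra_simps)
  then have f: "integrable lborel f" "integral\<^sup>L lborel f = 0"
    by (auto simp: has_bochner_integral_iff)
  have "AE z in lborel. 0 \<le> f z"
    using below above
  proof eventually_elim
    case (elim z)
    consider "z < c" | "z = c" | "c < z" by linarith
    then show ?case
      using elim ratio_strict_antimono[of z c] ratio_strict_antimono[of c z]
      by cases (auto simp: f_def mult.commute intro: mult_nonpos_nonpos mult_nonneg_nonneg)
  qed
  then have "AE z in lborel. f z = 0"
    using integral_nonneg_eq_0_iff_AE[OF f(1)] f(2) by simp
  then show ?thesis
    using AE_lborel_singleton[of c]
  proof eventually_elim
    case (elim z)
    then have "p c * q z - q c * p z \<noteq> 0"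
      using ratio_strict_antimono[of z c] ratio_strict_antimono[of c z]
      by (cases "z < c") (auto simp: mult.commute)
    with elim show ?case by (simp add: f_def)
  qed
qed

lemma boundary_kernel_orthogonal_q:
  assumes "(LBINT z:{a..b}. (z - v) * q z) = K * (LBINT z:{..a}. q z)"
  shows "has_bochner_integral lborel (\<lambda>z. boundary_kernel K a b v z * q z) 0"
proof -
  have "has_bochner_integral lborel
      (\<lambda>z. indicator {a..b} z * ((z - v) * q z) - K * (indicator {..a} z * q z))
      ((LBINT z:{a..b}. (z - v) * q z) - K * (LBINT z:{..a}. q z))"
    unfolding set_lebesgue_integral_def
    using q_integrable_Icc[of a b v, unfolded set_integrable_def]
      q_integrable_Iic[of a, unfolded set_integrable_def]
    by (intro has_bochner_integral_diff has_bochner_integral_mult_right)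
      (auto intro!: has_bochner_integral_integrable)
  moreover have "(\<lambda>z. boundary_kernel K a b v z * q z)
      = (\<lambda>z. indicator {a..b} z * ((z - v) * q z) - K * (indicator {..a} z * q z))"
    by (auto simp: fun_eq_iff boundary_kernel_def algebra_simps)
  ultimately show ?thesis using assms by simp
qed

lemma boundary_kernel_orthogonal_p:
  assumes "a \<le> b" and "(LBINT z:{a..b}. (z - (v - K)) * p z) = - K * (LBINT z:{b..}. p z)"
  shows "has_bochner_integral lborel (\<lambda>z. (boundary_kernel K a b v z + K) * p z) 0"
proof -
  let ?g = "\<lambda>z. indicator {a..b} z * ((z - (v - K)) * p z) + K * (indicator {b..} z * p z)"
  have "has_bochner_integral lborel ?g ((LBINT z:{a..b}. (z - (v - K)) * p z) + K * (LBINT z:{b..}. p z))"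
    unfolding set_lebesgue_integral_def
    using p_integrable_Icc[of a b "v - K", unfolded set_integrable_def]
      p_integrable_Ici[of b, unfolded set_integrable_def]
    by (intro has_bochner_integral_add has_bochner_integral_mult_right)
      (auto intro!: has_bochner_integral_integrable)
  then have g: "has_bochner_integral lborel ?g 0"
    using assms(2) by simp
  have "AE z in lborel. ?g z = (boundary_kernel K a b v z + K) * p z"
    using AE_lborel_singleton[of a] AE_lborel_singleton[of b]
    by eventually_elim (use assms(1) in \<open>auto simp: boundary_kernel_def indicator_def algebra_simps\<close>)
  then show ?thesis
    using g by (subst (asm) has_bochner_integral_cong_AE) (auto simp: boundary_kernel_def)
qed

theorem boundaries_strict_mono:
  assumes K: "K > 0" and v12: "v1 < v2"
    and a1: "a1 < v1 - K" and b1: "v1 < b1" and a2: "a2 < v2 - K" and b2: "v2 < b2"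
    and P1: "(LBINT z:{a1..b1}. (z - (v1 - K)) * p z) = - K * (LBINT z:{b1..}. p z)"
    and P2: "(LBINT z:{a2..b2}. (z - (v2 - K)) * p z) = - K * (LBINT z:{b2..}. p z)"
    and Q1: "(LBINT z:{a1..b1}. (z - v1) * q z) = K * (LBINT z:{..a1}. q z)"
    and Q2: "(LBINT z:{a2..b2}. (z - v2) * q z) = K * (LBINT z:{..a2}. q z)"
  shows "a1 < a2 \<and> b1 < b2"
proof (rule ccontr)
  define e where "e z = boundary_kernel K a2 b2 v2 z - boundary_kernel K a1 b1 v1 z" for z
  have "has_bochner_integral lborel (\<lambda>z. e z * p z) (0 - 0)"
    unfolding e_def using has_bochner_integral_diff[OF
      boundary_kernel_orthogonal_p[OF _ P2] boundary_kernel_orthogonal_p[OF _ P1]] assms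
    by (simp add: algebra_simps)
  then have ep: "has_bochner_integral lborel (\<lambda>z. e z * p z) 0" by simp
  have "has_bochner_integral lborel (\<lambda>z. e z * q z) (0 - 0)"
    unfolding e_def using has_bochner_integral_diff[OF
      boundary_kernel_orthogonal_q[OF Q2] boundary_kernel_orthogonal_q[OF Q1]]
    by (simp add: algebra_simps)
  then have eq: "has_bochner_integral lborel (\<lambda>z. e z * q z) 0" by simp
  have uminus: "has_bochner_integral lborel (\<lambda>z. - e z * f z) 0"
    if "has_bochner_integral lborel (\<lambda>z. e z * f z) 0" for f
    using has_bochner_integral_minus[OF that] by simp
  have off_boundaries: "AE z in lborel. z \<notin> {a1, b1, a2, b2}"
    by (intro AE_not_in finite_imp_null_set_lborel) simp
  assume not_mono: "\<not> (a1 < a2 \<and> b1 < b2)"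
  then have "AE z in lborel. e z = 0"
  proof (cases "a2 \<le> a1")
    case True
    show ?thesis
    proof (rule orthogonal_single_crossing_AE_zero[OF ep eq, of "max b1 v2"])
      show "AE z in lborel. z < max b1 v2 \<longrightarrow> e z \<le> 0"
        and "AE z in lborel. max b1 v2 < z \<longrightarrow> 0 \<le> e z"
        using off_boundaries
        by (eventually_elim, use boundary_kernel_cross_up[OF K v12 a1 b1 a2 b2 True] in
            \<open>auto simp: e_def\<close>)+
    qed
  next
    case False
    then have "b2 \<le> b1" using not_mono by linarith
    have "AE z in lborel. - e z = 0"
    proof (rule orthogonal_single_crossing_AE_zero[OF uminus[OF ep] uminus[OF eq], of "min a2 (v1 - K)"])
      show "AE z in lborel. z < min a2 (v1 - K) \<longrightarrow> - e z \<le> 0"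
        and "AE z in lborel. min a2 (v1 - K) < z \<longrightarrow> 0 \<le> - e z"
        using off_boundaries
        by (eventually_elim, use boundary_kernel_cross_down[OF K v12 a1 b1 a2 b2 \<open>b2 \<le> b1\<close>] in
            \<open>auto simp: e_def\<close>)+
    qed
    then show ?thesis by simp
  qed
  moreover have "\<not> (AE z in lborel. e z = 0)"
  proof (rule not_AE_zero_if_nonzero_on_interval)
    show "max a1 a2 < min b1 b2" using K v12 a1 b1 a2 b2 not_mono by auto
    show "e z \<noteq> 0" if "max a1 a2 < z" "z < min b1 b2" for z
      using boundary_kernel_diff_middle[OF that] v12 by (simp add: e_def)
  qed
  ultimately show False by simp
qed

end

lemma decreasing_ratio_pair_speed_dens:
  assumes "r \<ge> 0" and "\<rho> > 0" and "\<sigma> > 0"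
  shows "decreasing_ratio_pair (\<lambda>z. speed_dens \<rho> m \<sigma> z * phi_hat r \<rho> m \<sigma> z)
    (\<lambda>z. speed_dens \<rho> m \<sigma> z * psi_hat r \<rho> m \<sigma> z)"
proof -
  define w where "w = speed_dens \<rho> m \<sigma>"
  define \<phi> where "\<phi> = phi_hat r \<rho> m \<sigma>"
  define \<psi> where "\<psi> = psi_hat r \<rho> m \<sigma>"
  have w_pos: "w z > 0" for z using assms by (simp add: w_def speed_dens_pos)
  have \<phi>_pos: "\<phi> z > 0" and \<psi>_pos: "\<psi> z > 0" for z
    using assms by (simp_all add: \<phi>_def \<psi>_def phi_hat_pos psi_hat_eq_phi_hat_reflect)
  have \<phi>_less: "\<phi> y < \<phi> x" and \<psi>_less: "\<psi> x < \<psi> y" if "x < y" for x y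
    using phi_hat_strict_antimono[OF assms that] psi_hat_strict_mono[OF assms that]
    by (simp_all add: \<phi>_def \<psi>_def)
  have \<phi>_le: "\<phi> y \<le> \<phi> x" and \<psi>_le: "\<psi> x \<le> \<psi> y" if "x \<le> y" for x y
    using that \<phi>_less[of x y] \<psi>_less[of x y] by (cases "x = y"; simp)+
  have [measurable]: "\<phi> \<in> borel_measurable borel" "\<psi> \<in> borel_measurable borel"
    using borel_measurable_phi_hat[OF assms] borel_measurable_psi_hat[OF assms]
    by (simp_all add: \<phi>_def \<psi>_def)
  have [measurable]: "w \<in> borel_measurable borel"
    unfolding w_def speed_dens_def by measurable
  have ratio: "w c * \<phi> c * (w z * \<psi> z) < w z * \<phi> z * (w c * \<psi> c)" if "z < c" for z c
  proof -
    have "\<phi> c * \<psi> z < \<phi> z * \<psi> c"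
      using \<phi>_less[OF that] \<psi>_less[OF that] \<phi>_pos[of c] \<psi>_pos[of z]
      by (intro mult_strict_mono) auto
    then have "(w c * w z) * (\<phi> c * \<psi> z) < (w c * w z) * (\<phi> z * \<psi> c)"
      using w_pos[of c] w_pos[of z] by (intro mult_strict_left_mono) auto
    then show ?thesis by (simp only: ac_simps)
  qed
  have p_Icc: "set_integrable lborel {a..b} (\<lambda>z. w z * ((z - u) * \<phi> z))" for a b u
    unfolding w_def
  proof (rule set_integrable_speed_dens_mult[OF assms(2,3)])
    show "\<bar>(z - u) * \<phi> z\<bar> \<le> (\<bar>a\<bar> + \<bar>b\<bar> + \<bar>u\<bar>) * \<phi> a" if "z \<in> {a..b}" for z
      using that \<phi>_pos[of z] \<phi>_le[of a z] unfolding abs_mult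
      by (intro mult_mono) auto
  qed auto
  have q_Icc: "set_integrable lborel {a..b} (\<lambda>z. w z * ((z - u) * \<psi> z))" for a b u
    unfolding w_def
  proof (rule set_integrable_speed_dens_mult[OF assms(2,3)])
    show "\<bar>(z - u) * \<psi> z\<bar> \<le> (\<bar>a\<bar> + \<bar>b\<bar> + \<bar>u\<bar>) * \<psi> b" if "z \<in> {a..b}" for z
      using that \<psi>_pos[of z] \<psi>_le[of z b] unfolding abs_mult
      by (intro mult_mono) auto
  qed auto
  have p_Ici: "set_integrable lborel {b..} (\<lambda>z. w z * \<phi> z)" for b
    unfolding w_def
    by (rule set_integrable_speed_dens_mult[OF assms(2,3), where B = "\<phi> b"])
      (use \<phi>_pos \<phi>_le in \<open>auto simp: less_imp_le\<close>)
  have q_Iic: "set_integrable lborel {..a} (\<lambda>z. w z * \<psi> z)" for a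
    unfolding w_def
    by (rule set_integrable_speed_dens_mult[OF assms(2,3), where B = "\<psi> a"])
      (use \<psi>_pos \<psi>_le in \<open>auto simp: less_imp_le\<close>)
  show ?thesis
    unfolding w_def[symmetric] \<phi>_def[symmetric] \<psi>_def[symmetric]
    by unfold_locales (use ratio p_Icc q_Icc p_Ici q_Iic in \<open>simp_all add: ac_simps\<close>)
qed

theorem proposition4p4:
  fixes r \<rho> m \<sigma> c1 c2 \<theta>1 \<theta>2 a1 b1 a2 b2 :: real
  assumes "r > 0" and "\<rho> > 0" and "\<sigma> > 0" and "c1 + c2 > 0"
    and "\<theta>1 < \<theta>2"
    and "opt_boundaries r \<rho> m \<sigma> c1 c2 \<theta>1 a1 b1"
    and "opt_boundaries r \<rho> m \<sigma> c1 c2 \<theta>2 a2 b2"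
  shows "a1 < a2 \<and> b1 < b2"
proof -
  interpret decreasing_ratio_pair "\<lambda>z. speed_dens \<rho> m \<sigma> z * phi_hat r \<rho> m \<sigma> z"
    "\<lambda>z. speed_dens \<rho> m \<sigma> z * psi_hat r \<rho> m \<sigma> z"
    using assms(1-3) by (intro decreasing_ratio_pair_speed_dens) auto
  define K where "K = (r + \<rho>) * (c1 + c2)"
  define v where "v \<theta> = \<theta> + (r + \<rho>) * c2" for \<theta>
  have "v \<theta> - K = \<theta> - (r + \<rho>) * c1" for \<theta>
    by (simp add: v_def K_def algebra_simps)
  then have boundary_eqs:
    "a < v \<theta> - K \<and> v \<theta> < b
     \<and> (LBINT z:{a..b}. (z - (v \<theta> - K)) * (speed_dens \<rho> m \<sigma> z * phi_hat r \<rho> m \<sigma> z))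
        = - K * (LBINT z:{b..}. speed_dens \<rho> m \<sigma> z * phi_hat r \<rho> m \<sigma> z)
     \<and> (LBINT z:{a..b}. (z - v \<theta>) * (speed_dens \<rho> m \<sigma> z * psi_hat r \<rho> m \<sigma> z))
        = K * (LBINT z:{..a}. speed_dens \<rho> m \<sigma> z * psi_hat r \<rho> m \<sigma> z)"
    if "opt_boundaries r \<rho> m \<sigma> c1 c2 \<theta> a b" for \<theta> a b
    using that unfolding opt_boundaries_def by (simp add: v_def K_def algebra_simps diff_diff_eq)
  show ?thesis
    using boundaries_strict_mono[of K "v \<theta>1" "v \<theta>2" a1 b1 a2 b2]
      boundary_eqs[OF assms(6)] boundary_eqs[OF assms(7)] assms(1,2,4,5)
    by (simp add: K_def v_def)
qed

end
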